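(* Let $P$ be a continuous poset. A persistence module $M$ over $P$ is ephemeral if and only if $j_*M=0$. In other words, the full subcategory of ephemeral modules equals the kernel of $j_*$.
   Context: Let $P$ be a poset. A subset is directed if nonempty and any two elements have an upper bound in it. $x\ll y$ ($x$ way below $y$) means: for every directed $D$ whose supremum exists with $y\le\sup D$, some $d\in D$ satisfies $x\le d$. $P$ is continuous if for each $p$ the set $\{x:x\ll p\}$ is directed with supremum $p$. A set $U\subseteq P$ is Scott-open if it is an up-set meeting every directed set whose supremum exists and lies in $U$; $P^\sigma$ is $P$ with the Scott topology. $k$ is a commutative ring with unity; a persistence module over $P$ is a functor $M$ from $P$ (as a category, $p\to q$ iff $p\le q$) to $k$-modules. For an up-set $U$, $M(U)=\varprojlim_{x\in U}M_x$. $j_*M$ denotes the sheaf of $k$-modules on $P^\sigma$ given by $U\mapsto M(U)$ for Scott-open $U$ (the direct image along the identity $j$ from $P$ with the Alexandrov topology to $P^\sigma$ of the sheaf associated to $M$). A persistence module $M$ is ephemeral if $M(p\le q)=0$ for all $p\ll q$. *)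

theory Defs
  imports "HOL-Algebra.Module"
begin

definition directed :: "'a::order set \<Rightarrow> bool" where
  "directed D \<longleftrightarrow> D \<noteq> {} \<and> (\<forall>x\<in>D. \<forall>y\<in>D. \<exists>z\<in>D. x \<le> z \<and> y \<le> z)"

definition is_sup :: "'a::order set \<Rightarrow> 'a \<Rightarrow> bool" where
  "is_sup D s \<longleftrightarrow> (\<forall>d\<in>D. d \<le> s) \<and> (\<forall>b. (\<forall>d\<in>D. d \<le> b) \<longrightarrow> s \<le> b)"

definition way_below :: "'a::order \<Rightarrow> 'a \<Rightarrow> bool" (infix \<open>\<lless>\<close> 50) where
  "x \<lless> y \<longleftrightarrow> (\<forall>D s. directed D \<and> is_sup D s \<and> y \<le> s \<longrightarrow> (\<exists>d\<in>D. x \<le> d))"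

definition continuous_poset :: "'a::order itself \<Rightarrow> bool" where
  "continuous_poset _ \<longleftrightarrow>
     (\<forall>p::'a. directed {x. x \<lless> p} \<and> is_sup {x. x \<lless> p} p)"

definition scott_open :: "'a::order set \<Rightarrow> bool" where
  "scott_open U \<longleftrightarrow> (\<forall>x y. x \<in> U \<and> x \<le> y \<longrightarrow> y \<in> U) \<and>
     (\<forall>D s. directed D \<and> is_sup D s \<and> s \<in> U \<longrightarrow> D \<inter> U \<noteq> {})"

definition linear_map ::
  "('r, 'b) ring_scheme \<Rightarrow> ('r, 'm) module \<Rightarrow> ('r, 'm) module \<Rightarrow> ('m \<Rightarrow> 'm) \<Rightarrow> bool" where
  "linear_map R A B f \<longleftrightarrow>
     (\<forall>x\<in>carrier A. f x \<in> carrier B) \<and>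
     (\<forall>x\<in>carrier A. \<forall>y\<in>carrier A. f (x \<oplus>\<^bsub>A\<^esub> y) = f x \<oplus>\<^bsub>B\<^esub> f y) \<and>
     (\<forall>a\<in>carrier R. \<forall>x\<in>carrier A. f (a \<odot>\<^bsub>A\<^esub> x) = a \<odot>\<^bsub>B\<^esub> f x)"

definition persistence_module ::
  "('r, 'b) ring_scheme \<Rightarrow> ('a::order \<Rightarrow> ('r, 'm) module) \<Rightarrow> ('a \<Rightarrow> 'a \<Rightarrow> 'm \<Rightarrow> 'm) \<Rightarrow> bool" where
  "persistence_module R Mo f \<longleftrightarrow>
     (\<forall>p. module R (Mo p)) \<and>
     (\<forall>p q. p \<le> q \<longrightarrow> linear_map R (Mo p) (Mo q) (f p q)) \<and>
     (\<forall>p. \<forall>x\<in>carrier (Mo p). f p p x = x) \<and>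
     (\<forall>p q r. p \<le> q \<and> q \<le> r \<longrightarrow> (\<forall>x\<in>carrier (Mo p). f q r (f p q x) = f p r x))"

definition ephemeral ::
  "('a::order \<Rightarrow> ('r, 'm) module) \<Rightarrow> ('a \<Rightarrow> 'a \<Rightarrow> 'm \<Rightarrow> 'm) \<Rightarrow> bool" where
  "ephemeral Mo f \<longleftrightarrow>
     (\<forall>p q. p \<lless> q \<longrightarrow> (\<forall>x\<in>carrier (Mo p). f p q x = \<zero>\<^bsub>Mo q\<^esub>))"

text \<open>The (standard model of the) limit M(U) = lim_{x in U} M_x over an up-set U:
  compatible families of elements, extended by undefined outside U.\<close>
definition limit_sections ::
  "('a::order \<Rightarrow> ('r, 'm) module) \<Rightarrow> ('a \<Rightarrow> 'a \<Rightarrow> 'm \<Rightarrow> 'm) \<Rightarrow> 'a set \<Rightarrow> ('a \<Rightarrow> 'm) set" where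
  "limit_sections Mo f U =
     {s. (\<forall>u\<in>U. s u \<in> carrier (Mo u)) \<and>
         (\<forall>u\<in>U. \<forall>v\<in>U. u \<le> v \<longrightarrow> f u v (s u) = s v) \<and>
         (\<forall>u. u \<notin> U \<longrightarrow> s u = undefined)}"

definition limit_zero :: "('a \<Rightarrow> ('r, 'm) module) \<Rightarrow> 'a set \<Rightarrow> 'a \<Rightarrow> 'm" where
  "limit_zero Mo U = (\<lambda>u. if u \<in> U then \<zero>\<^bsub>Mo u\<^esub> else undefined)"

text \<open>j_* M = 0: the sheaf U \<mapsto> M(U) on the Scott topology vanishes, i.e. M(U) is the
  zero module for every Scott-open U.\<close>
definition jstar_zero ::
  "('a::order \<Rightarrow> ('r, 'm) module) \<Rightarrow> ('a \<Rightarrow> 'a \<Rightarrow> 'm \<Rightarrow> 'm) \<Rightarrow> bool" where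
  "jstar_zero Mo f \<longleftrightarrow>
     (\<forall>U. scott_open U \<longrightarrow> limit_sections Mo f U = {limit_zero Mo U})"

end

theory Submission
  imports Defs
begin

text \<open>If M is ephemeral, a section over a Scott-open U vanishes at each u \<in> U, because
  by continuity U contains some x \<lless> u and the section at u is the image of its value at x.
  Conversely, for p \<lless> q and m \<in> M p the family y \<mapsto> M(p \<le> y) m is a section over the set
  of elements way above p, which is Scott-open by the interpolation property of continuous
  posets; j_* M = 0 forces it to vanish, in particular at q.\<close>

lemma way_below_imp_le: "x \<lless> y \<Longrightarrow> x \<le> (y::'a::order)"
  unfolding way_below_def
  by (erule allE[of _ "{y}"], erule allE[of _ y]) (auto simp: directed_def is_sup_def)

lemma way_below_le_trans: "x \<lless> y \<Longrightarrow> y \<le> z \<Longrightarrow> x \<lless> (z::'a::order)"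
  unfolding way_below_def by (meson order_trans)

lemma le_way_below_trans: "x' \<le> x \<Longrightarrow> x \<lless> y \<Longrightarrow> x' \<lless> (y::'a::order)"
  unfolding way_below_def by (meson order_trans)

lemma continuous_posetD:
  assumes "continuous_poset TYPE('a::order)"
  shows "directed {x. x \<lless> q}" and "is_sup {x. x \<lless> (q::'a)} q"
  using assms unfolding continuous_poset_def by blast+

lemma way_below_interpolate:
  assumes cont: "continuous_poset TYPE('a::order)" and "p \<lless> (s::'a)"
  obtains z where "p \<lless> z" and "z \<lless> s"
proof -
  note C = continuous_posetD[OF cont]
  define E where "E = {y. \<exists>z. y \<lless> z \<and> z \<lless> s}"
  have "directed E"
    unfolding directed_def
  proof (intro conjI ballI)
    obtain z where z: "z \<lless> s" using C(1)[of s] unfolding directed_def by blast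
    obtain y where "y \<lless> z" using C(1)[of z] unfolding directed_def by blast
    then show "E \<noteq> {}" using z unfolding E_def by blast
  next
    fix y1 y2 assume "y1 \<in> E" "y2 \<in> E"
    then obtain z1 z2 where a: "y1 \<lless> z1" "z1 \<lless> s" "y2 \<lless> z2" "z2 \<lless> s"
      unfolding E_def by blast
    then obtain z where z: "z \<lless> s" "z1 \<le> z" "z2 \<le> z"
      using C(1)[of s] unfolding directed_def by blast
    have "y1 \<lless> z" "y2 \<lless> z" using a z way_below_le_trans by blast+
    then obtain y where "y \<lless> z" "y1 \<le> y" "y2 \<le> y"
      using C(1)[of z] unfolding directed_def by blast
    then show "\<exists>y\<in>E. y1 \<le> y \<and> y2 \<le> y" using z unfolding E_def by blast
  qed
  moreover have "is_sup E s"
    unfolding is_sup_def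
  proof (intro conjI allI impI ballI)
    fix y assume "y \<in> E"
    then show "y \<le> s" unfolding E_def using way_below_imp_le order_trans by blast
  next
    fix b assume b: "\<forall>d\<in>E. d \<le> b"
    have "z \<le> b" if "z \<lless> s" for z
    proof -
      have "\<forall>y\<in>{x. x \<lless> z}. y \<le> b" using b that unfolding E_def by blast
      then show ?thesis using C(2)[of z] unfolding is_sup_def by blast
    qed
    then show "s \<le> b" using C(2)[of s] unfolding is_sup_def by blast
  qed
  ultimately obtain y where "y \<in> E" "p \<le> y"
    using \<open>p \<lless> s\<close> unfolding way_below_def by blast
  then show ?thesis using that le_way_below_trans unfolding E_def by blast
qed

lemma scott_open_way_above:
  assumes cont: "continuous_poset TYPE('a::order)"
  shows "scott_open {y::'a. p \<lless> y}"
  unfolding scott_open_def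
proof (intro conjI allI impI)
  fix x y assume "x \<in> {y. p \<lless> y} \<and> x \<le> y"
  then show "y \<in> {y. p \<lless> y}" using way_below_le_trans by blast
next
  fix D s assume a: "directed D \<and> is_sup D s \<and> s \<in> {y::'a. p \<lless> y}"
  then obtain z where z: "p \<lless> z" "z \<lless> s" using way_below_interpolate[OF cont] by blast
  then obtain d where "d \<in> D" "z \<le> d" using a unfolding way_below_def by blast
  then show "D \<inter> {y. p \<lless> y} \<noteq> {}" using z way_below_le_trans by blast
qed

lemma scott_open_contains_way_below:
  assumes "continuous_poset TYPE('a::order)" and "scott_open U" and "(u::'a) \<in> U"
  obtains x where "x \<in> U" and "x \<lless> u"
  using assms continuous_posetD[OF assms(1), of u] unfolding scott_open_def by blast

lemma linear_map_zero:
  assumes "module R A" "module R B" "linear_map R A B g"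
  shows "g \<zero>\<^bsub>A\<^esub> = \<zero>\<^bsub>B\<^esub>"
proof -
  interpret A: module R A by fact
  interpret B: module R B by fact
  have g0: "g \<zero>\<^bsub>A\<^esub> \<in> carrier B" using assms(3) unfolding linear_map_def by simp
  have "g \<zero>\<^bsub>A\<^esub> = g \<zero>\<^bsub>A\<^esub> \<oplus>\<^bsub>B\<^esub> g \<zero>\<^bsub>A\<^esub>"
    using assms(3) unfolding linear_map_def by (metis A.zero_closed A.l_zero)
  then show ?thesis using g0 by (metis B.l_zero B.add.l_cancel_one B.zero_closed)
qed

lemma limit_zero_in_limit_sections:
  assumes "persistence_module R Mo f"
  shows "limit_zero Mo U \<in> limit_sections Mo f U"
proof -
  have mods: "\<And>p. module R (Mo p)" and lin: "\<And>p q. p \<le> q \<Longrightarrow> linear_map R (Mo p) (Mo q) (f p q)"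
    using assms unfolding persistence_module_def by auto
  have "\<zero>\<^bsub>Mo p\<^esub> \<in> carrier (Mo p)" for p
  proof -
    interpret module R "Mo p" by (rule mods)
    show ?thesis by simp
  qed
  then show ?thesis
    unfolding limit_sections_def limit_zero_def using linear_map_zero[OF mods mods lin] by simp
qed

lemma limit_sections_from_point:
  assumes "persistence_module R Mo f" and "x \<in> carrier (Mo p)" and "\<forall>y\<in>U. p \<le> y"
  shows "(\<lambda>y. if y \<in> U then f p y x else undefined) \<in> limit_sections Mo f U"
proof -
  have "linear_map R (Mo p) (Mo q) (f p q)" if "p \<le> q" for q
    using assms(1) that unfolding persistence_module_def by blast
  moreover have "f u v (f p u x) = f p v x" if "p \<le> u" "u \<le> v" for u v
    using assms(1,2) that unfolding persistence_module_def by blast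
  ultimately show ?thesis
    using assms(2,3) unfolding limit_sections_def linear_map_def by auto
qed

lemma ephemeral_imp_jstar_zero:
  assumes cont: "continuous_poset TYPE('a::order)"
    and M: "persistence_module R Mo f" and eph: "ephemeral Mo (f :: 'a \<Rightarrow> 'a \<Rightarrow> 'm \<Rightarrow> 'm)"
  shows "jstar_zero Mo f"
  unfolding jstar_zero_def
proof (intro allI impI)
  fix U :: "'a set" assume U: "scott_open U"
  have "s u = limit_zero Mo U u" if s: "s \<in> limit_sections Mo f U" for s u
  proof (cases "u \<in> U")
    case False
    then show ?thesis using s unfolding limit_sections_def limit_zero_def by simp
  next
    case True
    then obtain x where x: "x \<in> U" "x \<lless> u"
      using scott_open_contains_way_below[OF cont U] by blast
    have "s u = f x u (s x)"
      using s x True way_below_imp_le[OF x(2)] unfolding limit_sections_def by simp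
    also have "\<dots> = \<zero>\<^bsub>Mo u\<^esub>"
      using eph x s unfolding ephemeral_def limit_sections_def by simp
    finally show ?thesis using True unfolding limit_zero_def by simp
  qed
  then show "limit_sections Mo f U = {limit_zero Mo U}"
    using limit_zero_in_limit_sections[OF M] by blast
qed

lemma jstar_zero_imp_ephemeral:
  assumes cont: "continuous_poset TYPE('a::order)"
    and M: "persistence_module R Mo f" and J: "jstar_zero Mo (f :: 'a \<Rightarrow> 'a \<Rightarrow> 'm \<Rightarrow> 'm)"
  shows "ephemeral Mo f"
  unfolding ephemeral_def
proof (intro allI impI ballI)
  fix p q x assume pq: "p \<lless> q" and x: "x \<in> carrier (Mo p)"
  define U where "U = {y. p \<lless> y}"
  have "(\<lambda>y. if y \<in> U then f p y x else undefined) \<in> limit_sections Mo f U"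
    using limit_sections_from_point[OF M x] way_below_imp_le unfolding U_def by blast
  then have "(\<lambda>y. if y \<in> U then f p y x else undefined) = limit_zero Mo U"
    using J scott_open_way_above[OF cont] unfolding jstar_zero_def U_def by blast
  from fun_cong[OF this, of q] show "f p q x = \<zero>\<^bsub>Mo q\<^esub>"
    using pq unfolding limit_zero_def U_def by simp
qed

theorem mainTheorem4:
  fixes R :: "('r, 'b) ring_scheme"
    and Mo :: "'a::order \<Rightarrow> ('r, 'm) module"
    and f :: "'a \<Rightarrow> 'a \<Rightarrow> 'm \<Rightarrow> 'm"
  assumes "cring R"
    and "continuous_poset TYPE('a)"
    and "persistence_module R Mo f"
  shows "ephemeral Mo f \<longleftrightarrow> jstar_zero Mo f"
  using ephemeral_imp_jstar_zero[OF assms(2,3)] jstar_zero_imp_ephemeral[OF assms(2,3)] by blast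

end
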